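(* Let $k$ be a field and $V$ a $k$-vector space of dimension $n>2$. Define $b:V\times V\to V\wedge V$ by $b(u,v)=u\wedge v$. Then $b$ is alternating and $\operatorname{Adj}(b)=\{\lambda 1_V:\lambda\in k\}\cong k$ with trivial involution; that is, $b$ is $\perp$-indecomposable of orthogonal type.
   Context: $\operatorname{Adj}(b)$ is the set of $f\in\operatorname{End}V$ for which there is $f^*\in\operatorname{End}V$ with $b(uf,v)=b(u,vf^* )$ for all $u,v\in V$, with involution $f\mapsto f^*$. A bilinear map is $\perp$-indecomposable if $V$ has no decomposition into a set $\mathcal{X}\neq\{V\}$ of pairwise $b$-orthogonal subspaces generating $V$ with no proper subset generating $V$; orthogonal type means $\operatorname{Adj}(b)$ modulo its Jacobson radical is a field with trivial involution. *)

theory Defs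
  imports Main "HOL-Library.Function_Algebras"
begin

text \<open>V is modelled as k^n = ('n \<Rightarrow> 'k) for a finite index type 'n (dim V = CARD('n)).
  Vector addition/zero are the pointwise ones on functions.\<close>

definition vsmult :: "'k::field \<Rightarrow> ('n \<Rightarrow> 'k) \<Rightarrow> ('n \<Rightarrow> 'k)" (infixr "*v" 75) where
  "c *v v = (\<lambda>i. c * v i)"

definition klinear :: "(('n \<Rightarrow> 'k::field) \<Rightarrow> ('m \<Rightarrow> 'k)) \<Rightarrow> bool" where
  "klinear f \<longleftrightarrow> (\<forall>u v. f (u + v) = f u + f v) \<and> (\<forall>c u. f (c *v u) = c *v f u)"

definition kbilinear :: "(('n \<Rightarrow> 'k::field) \<Rightarrow> ('n \<Rightarrow> 'k) \<Rightarrow> ('m \<Rightarrow> 'k)) \<Rightarrow> bool" where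
  "kbilinear b \<longleftrightarrow> (\<forall>u. klinear (b u)) \<and> (\<forall>v. klinear (\<lambda>u. b u v))"

text \<open>The exterior square V \<and> V realised as alternating n x n matrices:
  u \<and> v corresponds to u v^T - v u^T (an isomorphism onto \<Lambda>^2 V in every characteristic).\<close>
definition wedge :: "('n \<Rightarrow> 'k::field) \<Rightarrow> ('n \<Rightarrow> 'k) \<Rightarrow> ('n \<times> 'n \<Rightarrow> 'k)" where
  "wedge u v = (\<lambda>(i, j). u i * v j - u j * v i)"

definition alternating :: "(('n \<Rightarrow> 'k::field) \<Rightarrow> ('n \<Rightarrow> 'k) \<Rightarrow> ('m \<Rightarrow> 'k)) \<Rightarrow> bool" where
  "alternating b \<longleftrightarrow> (\<forall>u. b u u = 0)"

definition is_adjoint :: "(('n \<Rightarrow> 'k::field) \<Rightarrow> ('n \<Rightarrow> 'k) \<Rightarrow> ('m \<Rightarrow> 'k))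
    \<Rightarrow> (('n \<Rightarrow> 'k) \<Rightarrow> ('n \<Rightarrow> 'k)) \<Rightarrow> (('n \<Rightarrow> 'k) \<Rightarrow> ('n \<Rightarrow> 'k)) \<Rightarrow> bool" where
  "is_adjoint b f g \<longleftrightarrow> klinear g \<and> (\<forall>u v. b (f u) v = b u (g v))"

definition Adj :: "(('n \<Rightarrow> 'k::field) \<Rightarrow> ('n \<Rightarrow> 'k) \<Rightarrow> ('m \<Rightarrow> 'k))
    \<Rightarrow> (('n \<Rightarrow> 'k) \<Rightarrow> ('n \<Rightarrow> 'k)) set" where
  "Adj b = {f. klinear f \<and> (\<exists>g. is_adjoint b f g)}"

definition ksubspace :: "('n \<Rightarrow> 'k::field) set \<Rightarrow> bool" where
  "ksubspace W \<longleftrightarrow> 0 \<in> W \<and> (\<forall>u\<in>W. \<forall>v\<in>W. u + v \<in> W) \<and> (\<forall>c. \<forall>u\<in>W. c *v u \<in> W)"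

definition kspan :: "('n \<Rightarrow> 'k::field) set \<Rightarrow> ('n \<Rightarrow> 'k) set" where
  "kspan S = \<Inter>{W. ksubspace W \<and> S \<subseteq> W}"

definition perp_decomposition :: "(('n \<Rightarrow> 'k::field) \<Rightarrow> ('n \<Rightarrow> 'k) \<Rightarrow> ('m \<Rightarrow> 'k))
    \<Rightarrow> ('n \<Rightarrow> 'k) set set \<Rightarrow> bool" where
  "perp_decomposition b X \<longleftrightarrow>
     (\<forall>W\<in>X. ksubspace W) \<and>
     (\<forall>U\<in>X. \<forall>W\<in>X. U \<noteq> W \<longrightarrow> (\<forall>u\<in>U. \<forall>w\<in>W. b u w = 0 \<and> b w u = 0)) \<and>
     kspan (\<Union>X) = UNIV \<and>
     (\<forall>Y. Y \<subset> X \<longrightarrow> kspan (\<Union>Y) \<noteq> UNIV)"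

definition perp_indecomposable :: "(('n \<Rightarrow> 'k::field) \<Rightarrow> ('n \<Rightarrow> 'k) \<Rightarrow> ('m \<Rightarrow> 'k)) \<Rightarrow> bool" where
  "perp_indecomposable b \<longleftrightarrow> (\<forall>X. perp_decomposition b X \<longrightarrow> X = {UNIV})"

definition jacobson_radical :: "(('n \<Rightarrow> 'k::field) \<Rightarrow> ('n \<Rightarrow> 'k)) set \<Rightarrow> (('n \<Rightarrow> 'k) \<Rightarrow> ('n \<Rightarrow> 'k)) set" where
  "jacobson_radical A = {a\<in>A. \<forall>x\<in>A. \<exists>y\<in>A.
      (\<lambda>v. v - x (a v)) \<circ> y = id \<and> y \<circ> (\<lambda>v. v - x (a v)) = id}"

end

theory Submission
  imports Defs
begin

text \<open>Writing the adjoint identity \<open>f u \<and> v = u \<and> g v\<close> in coordinates and testing it on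
  standard basis vectors at three distinct indices (this is where \<open>n > 2\<close> enters) shows
  that \<open>f\<close> and \<open>g\<close> are one and the same scalar. So \<open>Adj(b) \<cong> k\<close> is a field with trivial
  involution, and its Jacobson radical vanishes. For indecomposability: \<open>u \<and> w = 0\<close> with
  \<open>u \<noteq> 0\<close> forces \<open>w\<close> onto the line through \<open>u\<close>, so two orthogonal summands containing
  nonzero vectors would confine all of \<open>V\<close> to a line.\<close>

abbreviation scalar_map :: "'k::field \<Rightarrow> ('n \<Rightarrow> 'k) \<Rightarrow> ('n \<Rightarrow> 'k)" where
  "scalar_map c \<equiv> (\<lambda>v. c *v v)"

definition unit_vec :: "'n \<Rightarrow> ('n \<Rightarrow> 'k::field)" where
  "unit_vec a = (\<lambda>i. if i = a then 1 else 0)"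

lemma unit_vec_apply [simp]: "unit_vec a i = (if i = a then 1 else 0)"
  by (simp add: unit_vec_def)

lemma unit_vec_neq_zero: "unit_vec a \<noteq> (0 :: 'n \<Rightarrow> 'k::field)"
  by (simp add: fun_eq_iff)

lemma ex_third_index:
  assumes "2 < card (UNIV :: 'n::finite set)"
  shows "\<exists>c::'n. c \<noteq> a \<and> c \<noteq> b"
proof (rule ccontr)
  assume "\<not> ?thesis"
  then have "card (UNIV :: 'n set) \<le> card {a, b}"
    by (intro card_mono) auto
  also have "\<dots> \<le> 2"
    by (simp add: card_insert_if)
  finally show False
    using assms by simp
qed

lemma ex_other_index:
  assumes "1 < card (UNIV :: 'n::finite set)"
  shows "\<exists>c::'n. c \<noteq> a"
  using assms by (metis One_nat_def card_le_Suc0_iff_eq finite not_le)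

lemma vsmult_vsmult: "c *v (d *v v) = (c * d) *v v"
  by (simp add: vsmult_def fun_eq_iff)

lemma vsmult_zero_right [simp]: "c *v (0 :: 'n \<Rightarrow> 'k::field) = 0"
  by (simp add: vsmult_def fun_eq_iff)

lemma scalar_map_comp: "scalar_map c \<circ> scalar_map d = (scalar_map (c * d) :: ('n \<Rightarrow> 'k::field) \<Rightarrow> _)"
  by (simp add: fun_eq_iff vsmult_vsmult)

lemma scalar_map_one: "(scalar_map 1 :: ('n \<Rightarrow> 'k::field) \<Rightarrow> _) = id"
  by (simp add: fun_eq_iff vsmult_def)

lemma scalar_map_zero: "(scalar_map 0 :: ('n \<Rightarrow> 'k::field) \<Rightarrow> _) = 0"
  by (simp add: fun_eq_iff vsmult_def)

lemma inj_scalar_map: "inj (scalar_map :: 'k::field \<Rightarrow> ('n \<Rightarrow> 'k) \<Rightarrow> _)"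
proof
  fix c d :: 'k
  assume "(scalar_map c :: ('n \<Rightarrow> 'k) \<Rightarrow> _) = scalar_map d"
  from fun_cong[OF this, of "\<lambda>_. 1"] show "c = d"
    by (simp add: vsmult_def fun_eq_iff)
qed

lemma klinear_scalar_map: "klinear (scalar_map c :: ('n \<Rightarrow> 'k::field) \<Rightarrow> _)"
  by (simp add: klinear_def vsmult_def fun_eq_iff algebra_simps)

lemma scalar_map_comp_inverse:
  assumes "c \<noteq> 0"
  shows "scalar_map c \<circ> scalar_map (inverse c) = (id :: ('n \<Rightarrow> 'k::field) \<Rightarrow> _)"
    and "scalar_map (inverse c) \<circ> scalar_map c = (id :: ('n \<Rightarrow> 'k::field) \<Rightarrow> _)"
  using assms by (simp_all add: scalar_map_comp scalar_map_one id_def)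

lemma wedge_apply: "wedge u v (i, j) = u i * v j - u j * v i"
  by (simp add: wedge_def)

lemma kbilinear_wedge: "kbilinear wedge"
  by (simp add: kbilinear_def klinear_def wedge_def vsmult_def fun_eq_iff algebra_simps)

lemma alternating_wedge: "alternating wedge"
  by (simp add: alternating_def wedge_def fun_eq_iff)

lemma is_adjoint_wedge_scalar_map: "is_adjoint wedge (scalar_map c) (scalar_map c)"
  using klinear_scalar_map
  by (simp add: is_adjoint_def wedge_def vsmult_def fun_eq_iff algebra_simps)

lemma wedge_adjoint_pair_eq_scalar_map:
  fixes f g :: "('n::finite \<Rightarrow> 'k::field) \<Rightarrow> ('n \<Rightarrow> 'k)"
  assumes dim: "2 < card (UNIV :: 'n set)"
    and adj: "\<And>u v. wedge (f u) v = wedge u (g v)"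
  shows "\<exists>c. f = scalar_map c \<and> g = scalar_map c"
proof -
  have coord: "f u i * v j - f u j * v i = u i * g v j - u j * g v i" for u v i j
    using adj by (metis wedge_apply)
  have g_unit_off_diag: "g (unit_vec a) d = 0" if "d \<noteq> a" for a d
  proof -
    obtain c where "c \<noteq> a" "c \<noteq> d"
      using ex_third_index[OF dim] by blast
    then show ?thesis
      using coord[of "unit_vec c" c "unit_vec a" d] that by simp
  qed
  define \<mu> where "\<mu> a = g (unit_vec a) a" for a
  have f_apply: "f u i = \<mu> a * u i" if "a \<noteq> i" for u i a
    using coord[of u i "unit_vec a" a] g_unit_off_diag[of i a] that
    by (simp add: \<mu>_def mult.commute)
  have \<mu>_const: "\<mu> a = \<mu> a'" for a a'
  proof -
    obtain c where "c \<noteq> a" "c \<noteq> a'"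
      using ex_third_index[OF dim] by blast
    then show ?thesis
      using f_apply[of a c "unit_vec c"] f_apply[of a' c "unit_vec c"] by simp
  qed
  have f_eq: "f = scalar_map (\<mu> undefined)"
  proof (intro ext)
    fix u and i :: 'n
    obtain a where "a \<noteq> i"
      using ex_third_index[OF dim, of i i] by blast
    then show "f u i = (\<mu> undefined *v u) i"
      using f_apply \<mu>_const by (simp add: vsmult_def)
  qed
  have "g = scalar_map (\<mu> undefined)"
  proof (intro ext)
    fix v and d :: 'n
    obtain a where "a \<noteq> d"
      using ex_third_index[OF dim, of d d] by blast
    then show "g v d = (\<mu> undefined *v v) d"
      using coord[of "unit_vec a" a v d] by (simp add: f_eq vsmult_def)
  qed
  with f_eq show ?thesis
    by blast
qed

lemma Adj_wedge:
  assumes "2 < card (UNIV :: 'n::finite set)"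
  shows "Adj (wedge :: ('n \<Rightarrow> 'k::field) \<Rightarrow> _) = range scalar_map"
proof
  show "Adj wedge \<subseteq> (range scalar_map :: (('n \<Rightarrow> 'k) \<Rightarrow> _) set)"
  proof
    fix f :: "('n \<Rightarrow> 'k) \<Rightarrow> ('n \<Rightarrow> 'k)"
    assume "f \<in> Adj wedge"
    then obtain g where "\<And>u v. wedge (f u) v = wedge u (g v)"
      by (auto simp: Adj_def is_adjoint_def)
    from wedge_adjoint_pair_eq_scalar_map[OF assms this]
    obtain c where "f = scalar_map c"
      by blast
    then show "f \<in> range scalar_map"
      by simp
  qed
  show "range scalar_map \<subseteq> Adj (wedge :: ('n \<Rightarrow> 'k) \<Rightarrow> _)"
    using klinear_scalar_map is_adjoint_wedge_scalar_map by (auto simp: Adj_def)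
qed

lemma is_adjoint_wedge_imp_eq:
  assumes "2 < card (UNIV :: 'n::finite set)"
    and "is_adjoint (wedge :: ('n \<Rightarrow> 'k::field) \<Rightarrow> _) f g"
  shows "g = f"
  using wedge_adjoint_pair_eq_scalar_map[OF assms(1)] assms(2)
  by (metis is_adjoint_def)

lemma wedge_eq_zero_imp_in_line:
  fixes u w :: "'n \<Rightarrow> 'k::field"
  assumes "wedge u w = 0" and "u \<noteq> 0"
  shows "w \<in> range (\<lambda>t. t *v u)"
proof -
  obtain i where i: "u i \<noteq> 0"
    using assms(2) by (auto simp: fun_eq_iff)
  have "w = (w i / u i) *v u"
  proof
    fix j
    have "u i * w j - u j * w i = 0"
      using fun_cong[OF assms(1), of "(i, j)"] by (simp add: wedge_apply)
    then show "w j = ((w i / u i) *v u) j"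
      using i by (simp add: vsmult_def field_simps)
  qed
  then show ?thesis
    by blast
qed

lemma kspan_minimal: "ksubspace W \<Longrightarrow> S \<subseteq> W \<Longrightarrow> kspan S \<subseteq> W"
  by (auto simp: kspan_def)

lemma kspan_superset: "S \<subseteq> kspan S"
  by (auto simp: kspan_def)

lemma ksubspace_zero: "ksubspace {0 :: 'n \<Rightarrow> 'k::field}"
  by (simp add: ksubspace_def)

lemma ksubspace_line: "ksubspace (range (\<lambda>t. t *v (u :: 'n \<Rightarrow> 'k::field)))"
  unfolding ksubspace_def
proof (intro conjI ballI allI)
  show "0 \<in> range (\<lambda>t. t *v u)"
    using scalar_map_zero by (metis rangeI zero_fun_def)
next
  fix x y
  assume "x \<in> range (\<lambda>t. t *v u)" "y \<in> range (\<lambda>t. t *v u)"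
  then obtain s t where "x = s *v u" "y = t *v u"
    by blast
  then have "x + y = (s + t) *v u"
    by (simp add: vsmult_def fun_eq_iff algebra_simps)
  then show "x + y \<in> range (\<lambda>t. t *v u)"
    by blast
next
  fix c x
  assume "x \<in> range (\<lambda>t. t *v u)"
  then show "c *v x \<in> range (\<lambda>t. t *v u)"
    by (auto simp: vsmult_vsmult)
qed

lemma line_neq_UNIV:
  assumes "1 < card (UNIV :: 'n::finite set)"
  shows "range (\<lambda>t. t *v (u :: 'n \<Rightarrow> 'k::field)) \<noteq> UNIV"
proof
  assume line: "range (\<lambda>t. t *v u) = UNIV"
  obtain a b :: 'n where "a \<noteq> b"
    using ex_other_index[OF assms] by metis
  obtain t s where t: "unit_vec a = t *v u" and s: "unit_vec b = s *v u"
    using line by (metis UNIV_I imageE)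
  have "t * u a = 1" "t * u b = 0" "s * u b = 1"
    using fun_cong[OF t, of a] fun_cong[OF t, of b] fun_cong[OF s, of b] \<open>a \<noteq> b\<close>
    by (auto simp: vsmult_def)
  then show False
    by auto
qed

lemma wedge_perp_decomposition_other_components_zero:
  fixes X :: "('n::finite \<Rightarrow> 'k::field) set set"
  assumes dim: "1 < card (UNIV :: 'n set)"
    and X: "perp_decomposition wedge X"
    and U: "U \<in> X" "u \<in> U" "u \<noteq> 0"
    and W: "W \<in> X" "W \<noteq> U"
  shows "W \<subseteq> {0}"
proof
  fix w
  assume "w \<in> W"
  have orth: "wedge x y = 0" if "A \<in> X" "B \<in> X" "A \<noteq> B" "x \<in> A" "y \<in> B" for A B x y
    using X that by (simp add: perp_decomposition_def)
  show "w \<in> {0}"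
  proof (rule ccontr)
    assume "w \<notin> {0}"
    have "\<Union>X \<subseteq> range (\<lambda>t. t *v u)"
    proof
      fix x
      assume "x \<in> \<Union>X"
      then obtain Z where Z: "Z \<in> X" "x \<in> Z"
        by blast
      show "x \<in> range (\<lambda>t. t *v u)"
      proof (cases "Z = U")
        case True
        obtain t where "x = t *v w"
          using orth[OF W(1) Z(1)] W(2) True \<open>w \<in> W\<close> Z(2) \<open>w \<notin> {0}\<close>
          by (metis wedge_eq_zero_imp_in_line imageE singletonI)
        moreover obtain s where "w = s *v u"
          using orth[OF U(1) W(1)] W(2) U \<open>w \<in> W\<close>
          by (metis wedge_eq_zero_imp_in_line imageE)
        ultimately show ?thesis
          by (simp add: vsmult_vsmult)
      next
        case False
        then show ?thesis
          using orth[OF U(1) Z(1)] U Z(2) wedge_eq_zero_imp_in_line by metis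
      qed
    qed
    then have "kspan (\<Union>X) \<subseteq> range (\<lambda>t. t *v u)"
      by (rule kspan_minimal[OF ksubspace_line])
    with X line_neq_UNIV[OF dim] show False
      by (auto simp: perp_decomposition_def)
  qed
qed

lemma perp_indecomposable_wedge:
  assumes dim: "1 < card (UNIV :: 'n::finite set)"
  shows "perp_indecomposable (wedge :: ('n \<Rightarrow> 'k::field) \<Rightarrow> _)"
  unfolding perp_indecomposable_def
proof (intro allI impI)
  fix X :: "('n \<Rightarrow> 'k) set set"
  assume X: "perp_decomposition wedge X"
  then have span: "kspan (\<Union>X) = UNIV"
    and minimal: "\<And>Y. Y \<subset> X \<Longrightarrow> kspan (\<Union>Y) \<noteq> UNIV"
    and subspace: "\<And>W. W \<in> X \<Longrightarrow> ksubspace W"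
    by (auto simp: perp_decomposition_def)
  obtain U u where U: "U \<in> X" "u \<in> U" "u \<noteq> 0"
  proof -
    have "\<not> \<Union>X \<subseteq> {0}"
    proof
      assume "\<Union>X \<subseteq> {0}"
      then have "kspan (\<Union>X) \<subseteq> {0}"
        by (rule kspan_minimal[OF ksubspace_zero])
      with span have "unit_vec undefined \<in> {0 :: 'n \<Rightarrow> 'k}"
        by blast
      then show False
        by (metis singletonD unit_vec_neq_zero)
    qed
    then show ?thesis
      using that by blast
  qed
  have "\<Union>X \<subseteq> U"
    using wedge_perp_decomposition_other_components_zero[OF dim X U] subspace[OF U(1)]
    by (fastforce simp: ksubspace_def)
  then have U_UNIV: "U = UNIV"
    using kspan_minimal[OF subspace[OF U(1)]] span by blast
  have "X = {U}"
  proof (rule ccontr)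
    assume "X \<noteq> {U}"
    with U(1) have "{U} \<subset> X"
      by blast
    moreover have "kspan (\<Union>{U}) = UNIV"
      using kspan_superset[of U] U_UNIV by auto
    ultimately show False
      using minimal by blast
  qed
  with U_UNIV show "X = {UNIV}"
    by simp
qed

lemma jacobson_radical_division_subalgebra:
  fixes A :: "(('n \<Rightarrow> 'k::field) \<Rightarrow> ('n \<Rightarrow> 'k)) set"
  assumes "0 \<in> A" "id \<in> A"
    and "\<And>x. x \<in> A \<Longrightarrow> x 0 = 0"
    and "\<And>a. a \<in> A \<Longrightarrow> a \<noteq> 0 \<Longrightarrow> \<exists>a'\<in>A. a' \<circ> a = id"
  shows "jacobson_radical A = {0}"
proof
  show "jacobson_radical A \<subseteq> {0}"
  proof
    fix a
    assume a: "a \<in> jacobson_radical A"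
    show "a \<in> {0}"
    proof (rule ccontr)
      assume "a \<notin> {0}"
      then obtain a' where "a' \<in> A" "a' \<circ> a = id"
        using a assms(4) by (auto simp: jacobson_radical_def)
      then have zero: "(\<lambda>v. v - a' (a v)) = (\<lambda>v. 0)"
        by (metis comp_apply id_apply diff_self)
      from a \<open>a' \<in> A\<close> obtain y where y: "(\<lambda>v. v - a' (a v)) \<circ> y = id"
        unfolding jacobson_radical_def by blast
      have "(\<lambda>_. 1) = ((\<lambda>v. v - a' (a v)) \<circ> y) ((\<lambda>_. 1) :: 'n \<Rightarrow> 'k)"
        using y by simp
      also have "\<dots> = 0"
        by (simp add: zero)
      finally show False
        by (simp add: fun_eq_iff)
    qed
  qed
  have "(\<lambda>v. v - x (0 v)) = id" if "x \<in> A" for x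
    using assms(3)[OF that] by (simp add: fun_eq_iff)
  with assms(1,2) show "{0} \<subseteq> jacobson_radical A"
    by (auto simp: jacobson_radical_def)
qed

lemma jacobson_radical_scalar_maps:
  "jacobson_radical (range (scalar_map :: 'k::field \<Rightarrow> ('n \<Rightarrow> 'k) \<Rightarrow> _)) = {0}"
proof (rule jacobson_radical_division_subalgebra)
  show "0 \<in> range scalar_map" "id \<in> range scalar_map"
    by (metis rangeI scalar_map_zero, metis rangeI scalar_map_one)
  show "\<exists>a'\<in>range scalar_map. a' \<circ> a = id"
    if a: "a \<in> range scalar_map" and a_nonzero: "a \<noteq> 0" for a :: "('n \<Rightarrow> 'k) \<Rightarrow> ('n \<Rightarrow> 'k)"
  proof -
    obtain c where c: "a = scalar_map c"
      using a by blast
    with a_nonzero scalar_map_zero have "c \<noteq> 0"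
      by auto
    with c scalar_map_comp_inverse(2) show ?thesis
      by blast
  qed
  show "x 0 = 0" if "x \<in> range scalar_map" for x :: "('n \<Rightarrow> 'k) \<Rightarrow> ('n \<Rightarrow> 'k)"
    using that by auto
qed

theorem lemma7p1:
  fixes b :: "('n::finite \<Rightarrow> 'k::field) \<Rightarrow> ('n \<Rightarrow> 'k) \<Rightarrow> ('n \<times> 'n \<Rightarrow> 'k)"
  assumes dim: "card (UNIV :: 'n set) > 2"
    and b_def: "b = wedge"
  shows "kbilinear b \<and> alternating b
    \<and> Adj b = {(\<lambda>v. c *v v) | c. True}
    \<and> inj (\<lambda>c::'k. (\<lambda>v::'n \<Rightarrow> 'k. c *v v))
    \<and> (\<forall>f\<in>Adj b. \<forall>g. is_adjoint b f g \<longrightarrow> g = f)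
    \<and> perp_indecomposable b
    \<and> jacobson_radical (Adj b) = {0}
    \<and> (\<forall>f\<in>Adj b. \<forall>g\<in>Adj b. f \<circ> g = g \<circ> f)
    \<and> (\<forall>f\<in>Adj b. f \<noteq> 0 \<longrightarrow> (\<exists>g\<in>Adj b. f \<circ> g = id \<and> g \<circ> f = id))"
proof -
  have adjoint: "\<forall>f\<in>range scalar_map. \<forall>g. is_adjoint wedge f g \<longrightarrow> g = (f :: ('n \<Rightarrow> 'k) \<Rightarrow> _)"
    using is_adjoint_wedge_imp_eq[OF dim] by blast
  have commute: "\<forall>f\<in>range scalar_map. \<forall>g\<in>range scalar_map. f \<circ> g = g \<circ> (f :: ('n \<Rightarrow> 'k) \<Rightarrow> _)"
    by (auto simp: scalar_map_comp mult.commute)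
  have invertible: "\<forall>f\<in>range scalar_map. f \<noteq> 0 \<longrightarrow>
      (\<exists>g\<in>range scalar_map. f \<circ> g = id \<and> g \<circ> (f :: ('n \<Rightarrow> 'k) \<Rightarrow> _) = id)"
  proof (intro ballI impI)
    fix f :: "('n \<Rightarrow> 'k) \<Rightarrow> ('n \<Rightarrow> 'k)"
    assume "f \<in> range scalar_map" "f \<noteq> 0"
    then obtain c where "f = scalar_map c" "c \<noteq> 0"
      using scalar_map_zero by auto
    with scalar_map_comp_inverse show "\<exists>g\<in>range scalar_map. f \<circ> g = id \<and> g \<circ> f = id"
      by blast
  qed
  have range_eq: "range scalar_map = {(\<lambda>v. c *v v) | c. True}"
    by blast
  have "perp_indecomposable (wedge :: ('n \<Rightarrow> 'k) \<Rightarrow> _)"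
    using dim by (intro perp_indecomposable_wedge) simp
  then show ?thesis
    unfolding b_def Adj_wedge[OF dim]
    using range_eq kbilinear_wedge alternating_wedge inj_scalar_map adjoint jacobson_radical_scalar_maps
      commute invertible
    by (intro conjI)
qed

end
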